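(* Let $G=(S,R,\rho)$ be a $q$-grammar such that $R(s_{i+1})=q\uparrow R(s_i)$ for every $s_i\in\mathbb{S}$, and let $\phi$ be a master-linear evaluation. Then for all $f,g\in\mathbb{E}$, \[ \phi\big(\mathrm{Gen}^{(G)}_q(fg;u)\big)=\phi\big(\mathrm{Gen}^{(G)}_q(f;u)\big)\cdot\phi\big(\mathrm{Gen}^{(G)}_q(g;u)\big). \]
   Context: $\mathbb{K}$ is a commutative ring with unity and characteristic zero, $q$ an indeterminate. For a set $S$ of master variables, $\mathbb{S}=\{s_i:s\in S,\ i\ge0\}$ is a set of non-commuting variables, $F(\mathbb{S})$ the free group on $\mathbb{S}$, $\mathbb{E}=\mathbb{K}[q][F(\mathbb{S})]$ its group algebra. A rule $R$ assigns to each $s_i$ an element $R(s_i)\in\mathbb{E}$, extended by $R(s_i^{-1})=-s_i^{-1}R(s_i)s_{i+1}^{-1}$. The up-arrow $\uparrow$ is the $\mathbb{K}[q]$-linear map replacing each letter $s_i^{\pm1}$ of a word by $s_{i+1}^{\pm1}$. An order $\rho$ is a map rewriting each word by permuting its letters, extended linearly to $\mathbb{E}$. A $q$-grammar is $(S,R,\rho)$; its $q$-derivative is the $\mathbb{K}[q]$-linear map with $D(w_1\cdots w_n)=\sum_{j=1}^n\rho\big(w_1\cdots w_{j-1}R(w_j)\uparrow(w_{j+1}\cdots w_n)\big)$ for letters $w_j\in\mathbb{S}\cup\mathbb{S}^{-1}$, $D^0=\mathrm{id}$, $D^k=D\circ D^{k-1}$. $\mathrm{Gen}^{(G)}_q(f;u)=\sum_{n\ge0}D^n(f)u^n/(q;q)_n$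 with $(q;q)_n=\prod_{i=1}^n(1-q^i)$. An evaluation is a map $\phi$ from $\mathbb{S}$ to a commutative ring $\mathbb{V}$ containing $\mathbb{K}[q]$ (with invertible values), extended to a $\mathbb{K}[q]$-linear ring morphism $\mathbb{E}\to\mathbb{V}$ with $\phi(s_i^{-1})=\phi(s_i)^{-1}$, and applied coefficientwise to power series in $u$. It is master-linear if $\phi(s_i)=\phi(s_j)$ for every $s\in S$ and all $i,j\ge0$. *)

theory Defs
  imports "HOL-Library.Poly_Mapping" "HOL-Computational_Algebra.Polynomial"
          "HOL-Computational_Algebra.Formal_Power_Series"
begin

text \<open>A letter s_i^{+1} is (s, i, True), a letter s_i^{-1} is (s, i, False).
  Elements of the free group F(SS) are represented by reduced words.\<close>

type_synonym 's letter = "'s \<times> nat \<times> bool"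

fun inv_letter :: "'s letter \<Rightarrow> 's letter" where
  "inv_letter (s, i, b) = (s, i, \<not> b)"

fun reduced :: "'s letter list \<Rightarrow> bool" where
  "reduced [] = True"
| "reduced [x] = True"
| "reduced (x # y # ys) = (y \<noteq> inv_letter x \<and> reduced (y # ys))"

fun red :: "'s letter list \<Rightarrow> 's letter list" where
  "red [] = []"
| "red (x # xs) = (case red xs of
       [] \<Rightarrow> [x]
     | y # ys \<Rightarrow> (if y = inv_letter x then ys else x # y # ys))"

text \<open>Elements of EE: finitely supported maps from words to K[q] whose support
  consists of reduced words.\<close>
type_synonym ('s, 'k) galg = "'s letter list \<Rightarrow>\<^sub>0 'k poly"

definition galg_carrier :: "('s, 'k::comm_ring_1) galg set" where
  "galg_carrier = {f. \<forall>w \<in> Poly_Mapping.keys f. reduced w}"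

definition basis :: "'s letter list \<Rightarrow> ('s, 'k::comm_ring_1) galg" where
  "basis w = Poly_Mapping.single (red w) 1"

definition escale :: "'k::comm_ring_1 poly \<Rightarrow> ('s, 'k) galg \<Rightarrow> ('s, 'k) galg" where
  "escale a f = Poly_Mapping.map (\<lambda>c. a * c) f"

definition lin_ext :: "('s letter list \<Rightarrow> ('t, 'k::comm_ring_1) galg)
    \<Rightarrow> ('s, 'k) galg \<Rightarrow> ('t, 'k) galg" where
  "lin_ext h f = (\<Sum>w \<in> Poly_Mapping.keys f. escale (Poly_Mapping.lookup f w) (h w))"

definition emul :: "('s, 'k::comm_ring_1) galg \<Rightarrow> ('s, 'k) galg \<Rightarrow> ('s, 'k) galg" where
  "emul f g = (\<Sum>u \<in> Poly_Mapping.keys f. \<Sum>v \<in> Poly_Mapping.keys g.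
       Poly_Mapping.single (red (u @ v)) (Poly_Mapping.lookup f u * Poly_Mapping.lookup g v))"

definition up_word :: "'s letter list \<Rightarrow> 's letter list" where
  "up_word w = map (\<lambda>(s, i, b). (s, Suc i, b)) w"

definition up :: "('s, 'k::comm_ring_1) galg \<Rightarrow> ('s, 'k) galg" where
  "up f = lin_ext (\<lambda>w. basis (up_word w)) f"

text \<open>A rule is given by R s i = R(s_i); it is extended to inverse letters by
  R(s_i^{-1}) = - s_i^{-1} R(s_i) s_{i+1}^{-1}.\<close>
fun rule_letter :: "('s \<Rightarrow> nat \<Rightarrow> ('s, 'k::comm_ring_1) galg) \<Rightarrow> 's letter \<Rightarrow> ('s, 'k) galg" where
  "rule_letter R (s, i, True) = R s i"
| "rule_letter R (s, i, False) =
     - emul (emul (basis [(s, i, False)]) (R s i)) (basis [(s, Suc i, False)])"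

text \<open>An order permutes the letters of each word; it is applied to EE linearly
  (the permuted word is read as an element of F(SS)).\<close>
definition is_order :: "('s letter list \<Rightarrow> 's letter list) \<Rightarrow> bool" where
  "is_order \<rho> \<longleftrightarrow> (\<forall>w. reduced w \<longrightarrow> mset (\<rho> w) = mset w)"

definition order_apply :: "('s letter list \<Rightarrow> 's letter list) \<Rightarrow> ('s, 'k::comm_ring_1) galg \<Rightarrow> ('s, 'k) galg" where
  "order_apply \<rho> f = lin_ext (\<lambda>w. basis (\<rho> w)) f"

definition qder_word :: "('s \<Rightarrow> nat \<Rightarrow> ('s, 'k::comm_ring_1) galg) \<Rightarrow> ('s letter list \<Rightarrow> 's letter list)
    \<Rightarrow> 's letter list \<Rightarrow> ('s, 'k) galg" where
  "qder_word R \<rho> w = (\<Sum>j < length w.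
      order_apply \<rho> (emul (emul (basis (take j w)) (rule_letter R (w ! j)))
                          (up (basis (drop (Suc j) w)))))"

definition qder :: "('s \<Rightarrow> nat \<Rightarrow> ('s, 'k::comm_ring_1) galg) \<Rightarrow> ('s letter list \<Rightarrow> 's letter list)
    \<Rightarrow> ('s, 'k) galg \<Rightarrow> ('s, 'k) galg" where
  "qder R \<rho> f = lin_ext (qder_word R \<rho>) f"

definition qvar :: "'k::comm_ring_1 poly" where
  "qvar = [:0, 1:]"

definition qpoch :: "nat \<Rightarrow> 'k::comm_ring_1 poly" where
  "qpoch n = (\<Prod>i = 1..n. 1 - qvar ^ i)"

definition invertible_el :: "'v::comm_ring_1 \<Rightarrow> bool" where
  "invertible_el x \<longleftrightarrow> (\<exists>y. x * y = 1)"

definition unit_inv :: "'v::comm_ring_1 \<Rightarrow> 'v" where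
  "unit_inv x = (THE y. x * y = 1)"

text \<open>V is a commutative ring containing K[q], via the injective ring
  homomorphism iota.\<close>
definition embeds_Kq :: "('k::comm_ring_1 poly \<Rightarrow> 'v::comm_ring_1) \<Rightarrow> bool" where
  "embeds_Kq \<iota> \<longleftrightarrow> inj \<iota> \<and> \<iota> 1 = 1 \<and> (\<forall>a b. \<iota> (a + b) = \<iota> a + \<iota> b) \<and> (\<forall>a b. \<iota> (a * b) = \<iota> a * \<iota> b)"

fun eval_letter :: "('s \<Rightarrow> nat \<Rightarrow> 'v::comm_ring_1) \<Rightarrow> 's letter \<Rightarrow> 'v" where
  "eval_letter \<phi> (s, i, True) = \<phi> s i"
| "eval_letter \<phi> (s, i, False) = unit_inv (\<phi> s i)"

definition eval_word :: "('s \<Rightarrow> nat \<Rightarrow> 'v::comm_ring_1) \<Rightarrow> 's letter list \<Rightarrow> 'v" where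
  "eval_word \<phi> w = prod_list (map (eval_letter \<phi>) w)"

definition eval :: "('k::comm_ring_1 poly \<Rightarrow> 'v::comm_ring_1) \<Rightarrow> ('s \<Rightarrow> nat \<Rightarrow> 'v)
    \<Rightarrow> ('s, 'k) galg \<Rightarrow> 'v" where
  "eval \<iota> \<phi> f = (\<Sum>w \<in> Poly_Mapping.keys f. \<iota> (Poly_Mapping.lookup f w) * eval_word \<phi> w)"

definition master_linear :: "('s \<Rightarrow> nat \<Rightarrow> 'v) \<Rightarrow> bool" where
  "master_linear \<phi> \<longleftrightarrow> (\<forall>s i j. \<phi> s i = \<phi> s j)"

text \<open>phi(Gen_q(f;u)) = sum_n phi(D^n f) u^n / (q;q)_n, as a formal power series in u over V.\<close>
definition eval_gen :: "('k::comm_ring_1 poly \<Rightarrow> 'v::comm_ring_1) \<Rightarrow> ('s \<Rightarrow> nat \<Rightarrow> 'v)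
    \<Rightarrow> ('s \<Rightarrow> nat \<Rightarrow> ('s, 'k) galg) \<Rightarrow> ('s letter list \<Rightarrow> 's letter list)
    \<Rightarrow> ('s, 'k) galg \<Rightarrow> 'v fps" where
  "eval_gen \<iota> \<phi> R \<rho> f =
     Abs_fps (\<lambda>n. eval \<iota> \<phi> ((qder R \<rho> ^^ n) f) * unit_inv (\<iota> (qpoch n)))"

end

(*
  Write Gen f for the evaluated generating function phi(Gen(f;u)). In the power series ring,
  the q-derivative D becomes the q-difference quotient delta F = (F(u) - F(q u)) / u: dividing
  by (q;q)_n is exactly what makes Gen (D f) = delta (Gen f). The operator delta obeys the
  twisted Leibniz rule delta (F H) = delta F * H(q u) + F * delta H, which is also the shape
  of D on a product of words once phi has forgotten the order rho (V is commutative) and the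
  up-arrow (phi is master-linear).

  By linearity it suffices to show that Gen of a word is the product of Gen of its letters.
  This is proved together with Gen(up x) = (Gen x)(q u) for letters x (which is where
  R(s_(i+1)) = q up R(s_i) enters) by induction on the order N up to which the power series
  agree: the constant terms agree since phi is multiplicative on words, and a power series is
  determined up to order N + 1 by its constant term and by delta of it up to order N, because
  the factors 1 - q^n are invertible in V. Both sides have the same delta up to order N by
  the Leibniz rules and the induction hypothesis; cancelling letters s_i s_i^(-1) costs one
  more use of the induction hypothesis through the rule for R(s_i^(-1)).
*)

theory Submission
  imports Defs
begin

unbundle fps_syntax

lemma lookup_escale [simp]: "Poly_Mapping.lookup (escale a f) w = a * Poly_Mapping.lookup f w"
  unfolding escale_def by (simp add: map.rep_eq when_def)

lemma keys_escale: "Poly_Mapping.keys (escale a f) \<subseteq> Poly_Mapping.keys f"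
  by (auto simp: in_keys_iff)

lemma escale_0_left [simp]: "escale 0 f = 0"
  by (rule poly_mapping_eqI) simp

lemma escale_1_left [simp]: "escale 1 f = f"
  by (rule poly_mapping_eqI) simp

lemma escale_escale: "escale a (escale b f) = escale (a * b) f"
  by (rule poly_mapping_eqI) (simp add: algebra_simps)

lemma escale_add_left: "escale (a + b) f = escale a f + escale b f"
  by (rule poly_mapping_eqI) (simp add: lookup_add algebra_simps)

lemma escale_sum: "escale a (sum h S) = (\<Sum>x\<in>S. escale a (h x))"
  by (rule poly_mapping_eqI) (simp add: lookup_sum sum_distrib_left)

lemma escale_single: "escale a (Poly_Mapping.single w c) = Poly_Mapping.single w (a * c)"
  by (rule poly_mapping_eqI) (simp add: lookup_single when_def)

lemma lin_ext_eq_sum_superset: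
  assumes "finite S" "Poly_Mapping.keys f \<subseteq> S"
  shows "lin_ext h f = (\<Sum>w\<in>S. escale (Poly_Mapping.lookup f w) (h w))"
  unfolding lin_ext_def
  by (rule sum.mono_neutral_left) (use assms in \<open>auto simp: in_keys_iff\<close>)

lemma lin_ext_add: "lin_ext h (f + g) = lin_ext h f + lin_ext h g"
proof -
  let ?S = "Poly_Mapping.keys f \<union> Poly_Mapping.keys g"
  have "lin_ext h (f + g) = (\<Sum>w\<in>?S. escale (Poly_Mapping.lookup (f + g) w) (h w))"
    by (rule lin_ext_eq_sum_superset) (auto dest: keys_add[THEN subsetD])
  also have "\<dots> = (\<Sum>w\<in>?S. escale (Poly_Mapping.lookup f w) (h w))
                + (\<Sum>w\<in>?S. escale (Poly_Mapping.lookup g w) (h w))"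
    by (simp add: lookup_add escale_add_left sum.distrib)
  also have "\<dots> = lin_ext h f + lin_ext h g"
    by (subst (1 2) lin_ext_eq_sum_superset[symmetric]) auto
  finally show ?thesis .
qed

lemma lin_ext_escale: "lin_ext h (escale a f) = escale a (lin_ext h f)"
proof -
  have "lin_ext h (escale a f)
      = (\<Sum>w\<in>Poly_Mapping.keys f. escale (Poly_Mapping.lookup (escale a f) w) (h w))"
    by (rule lin_ext_eq_sum_superset) (auto simp: keys_escale)
  then show ?thesis
    by (simp add: lin_ext_def escale_sum escale_escale)
qed

lemma lin_ext_single: "lin_ext h (Poly_Mapping.single w c) = escale c (h w)"
  by (simp add: lin_ext_def)

lemma qder_pow_add: "(qder R \<rho> ^^ n) (f + g) = (qder R \<rho> ^^ n) f + (qder R \<rho> ^^ n) g"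
  by (induction n) (simp_all add: qder_def lin_ext_add)

lemma qder_pow_escale: "(qder R \<rho> ^^ n) (escale a f) = escale a ((qder R \<rho> ^^ n) f)"
  by (induction n) (simp_all add: qder_def lin_ext_escale)

lemma reduced_red: "reduced (red w)"
proof (induction w)
  case (Cons x xs)
  then show ?case
    by (cases "red xs" rule: reduced.cases) (auto simp: red.simps(2) split: list.splits)
qed simp

lemma reduced_tl: "reduced (x # xs) \<Longrightarrow> reduced xs"
  by (cases xs) auto

lemma red_reduced: "reduced w \<Longrightarrow> red w = w"
proof (induction w)
  case (Cons x xs)
  then have "red xs = xs" using reduced_tl by blast
  with Cons.prems show ?case by (cases xs) auto
qed simp

definition red_Cons :: "'s letter \<Rightarrow> 's letter list \<Rightarrow> 's letter list" where
  "red_Cons x z = (case z of [] \<Rightarrow> [x] | y # ys \<Rightarrow> (if y = inv_letter x then ys else x # y # ys))"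

lemma red_Cons_red: "red (x # w) = red_Cons x (red w)"
  by (simp add: red_Cons_def)

declare red.simps(2) [simp del] red_Cons_red [simp]

definition up_letter :: "'s letter \<Rightarrow> 's letter" where
  "up_letter x = (case x of (s, i, b) \<Rightarrow> (s, Suc i, b))"

lemma up_letter_simp [simp]: "up_letter (s, i, b) = (s, Suc i, b)"
  by (simp add: up_letter_def)

lemma up_word_eq_map: "up_word w = map up_letter w"
  unfolding up_word_def up_letter_def by simp

lemma galg_carrier_sum:
  "(\<And>x. x \<in> S \<Longrightarrow> F x \<in> galg_carrier) \<Longrightarrow> sum F S \<in> galg_carrier"
proof (induction S rule: infinite_finite_induct)
  case (insert x S)
  then show ?case
    using keys_add[of "F x" "sum F S"] by (auto simp: galg_carrier_def)
qed (simp_all add: galg_carrier_def)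

lemma galg_carrier_escale: "f \<in> galg_carrier \<Longrightarrow> escale a f \<in> galg_carrier"
  unfolding galg_carrier_def using keys_escale[of a f] by auto

lemma galg_carrier_single_red: "Poly_Mapping.single (red w) c \<in> galg_carrier"
  unfolding galg_carrier_def by (simp add: reduced_red)

lemma galg_carrier_basis: "basis w \<in> galg_carrier"
  unfolding basis_def by (rule galg_carrier_single_red)

lemma galg_carrier_emul: "emul f g \<in> galg_carrier"
  unfolding emul_def by (intro galg_carrier_sum galg_carrier_single_red)

lemma galg_carrier_lin_ext: "(\<And>w. h w \<in> galg_carrier) \<Longrightarrow> lin_ext h f \<in> galg_carrier"
  unfolding lin_ext_def by (intro galg_carrier_sum galg_carrier_escale) blast

lemma galg_carrier_up: "up f \<in> galg_carrier"
  unfolding up_def by (intro galg_carrier_lin_ext galg_carrier_basis)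

lemma galg_carrier_rule_letter:
  assumes "\<And>s i. R s i \<in> galg_carrier"
  shows "rule_letter R x \<in> galg_carrier"
proof -
  obtain s i b where x: "x = (s, i, b)" by (cases x)
  have "- emul f g \<in> galg_carrier" for f g :: "('s, 'k::comm_ring_1) galg"
    using galg_carrier_emul[of f g] by (simp add: galg_carrier_def)
  with assms show ?thesis
    by (cases b) (simp_all add: x)
qed

lemma galg_carrier_eq_sum_basis:
  assumes "f \<in> galg_carrier"
  shows "f = (\<Sum>u\<in>Poly_Mapping.keys f. escale (Poly_Mapping.lookup f u) (basis u))"
proof -
  have "f = (\<Sum>u\<in>Poly_Mapping.keys f. Poly_Mapping.single u (Poly_Mapping.lookup f u))"
    by (rule poly_mapping_eqI) (simp add: lookup_sum lookup_single when_def in_keys_iff)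
  also have "\<dots> = (\<Sum>u\<in>Poly_Mapping.keys f. escale (Poly_Mapping.lookup f u) (basis u))"
    using assms by (intro sum.cong) (simp_all add: galg_carrier_def basis_def red_reduced escale_single)
  finally show ?thesis .
qed

lemma single_red_eq_escale_basis: "Poly_Mapping.single (red w) c = escale c (basis w)"
  by (simp add: basis_def escale_single)

lemma basis_red: "basis (red w) = basis w"
  by (simp add: basis_def red_reduced reduced_red)

lemma qder_basis: "qder R \<rho> (basis w) = qder_word R \<rho> (red w)"
  by (simp add: qder_def basis_def lin_ext_single)

section \<open>q-difference calculus on formal power series\<close>

text \<open>\<open>fps_qscale Q F\<close> is \<open>F(Q u)\<close>, and \<open>fps_qdiff Q F\<close> is the q-difference quotient
  \<open>(F(u) - F(Q u)) / u\<close>.\<close>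

definition fps_qscale :: "'a::comm_semiring_1 \<Rightarrow> 'a fps \<Rightarrow> 'a fps" where
  "fps_qscale Q F = Abs_fps (\<lambda>m. Q ^ m * F $ m)"

definition fps_qdiff :: "'a::comm_ring_1 \<Rightarrow> 'a fps \<Rightarrow> 'a fps" where
  "fps_qdiff Q F = Abs_fps (\<lambda>m. F $ Suc m * (1 - Q ^ Suc m))"

lemma fps_qscale_nth [simp]: "fps_qscale Q F $ m = Q ^ m * F $ m"
  by (simp add: fps_qscale_def)

lemma fps_qdiff_nth [simp]: "fps_qdiff Q F $ m = F $ Suc m * (1 - Q ^ Suc m)"
  by (simp add: fps_qdiff_def)

lemma fps_qscale_mult: "fps_qscale Q (F * H) = fps_qscale Q F * fps_qscale Q H"
proof (rule fps_ext)
  fix n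
  have "fps_qscale Q (F * H) $ n = (\<Sum>i\<le>n. Q ^ n * (F $ i * H $ (n - i)))"
    by (simp add: fps_mult_nth sum_distrib_left atLeast0AtMost)
  also have "\<dots> = (\<Sum>i\<le>n. Q ^ i * F $ i * (Q ^ (n - i) * H $ (n - i)))"
    by (rule sum.cong) (simp_all add: power_add[symmetric] algebra_simps)
  finally show "fps_qscale Q (F * H) $ n = (fps_qscale Q F * fps_qscale Q H) $ n"
    by (simp add: fps_mult_nth atLeast0AtMost)
qed

lemma fps_qscale_add: "fps_qscale Q (F + H) = fps_qscale Q F + fps_qscale Q H"
  by (rule fps_ext) (simp add: algebra_simps)

lemma fps_qscale_uminus: "fps_qscale (Q::'a::comm_ring_1) (- F) = - fps_qscale Q F"
  by (rule fps_ext) simp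

lemma fps_qscale_0 [simp]: "fps_qscale Q 0 = 0"
  by (rule fps_ext) simp

lemma fps_qscale_1 [simp]: "fps_qscale Q 1 = 1"
  by (rule fps_ext) simp

lemma fps_qscale_const_mult: "fps_qscale Q (fps_const c * F) = fps_const c * fps_qscale Q F"
  by (rule fps_ext) (simp add: algebra_simps)

lemma fps_qscale_sum: "fps_qscale Q (sum F S) = (\<Sum>x\<in>S. fps_qscale Q (F x))"
  by (induction S rule: infinite_finite_induct) (simp_all add: fps_qscale_add)

lemma fps_qscale_prod_list:
  "fps_qscale Q (prod_list (map F xs)) = prod_list (map (\<lambda>x. fps_qscale Q (F x)) xs)"
  by (induction xs) (simp_all add: fps_qscale_mult)

lemma fps_qdiff_qscale: "fps_qdiff Q (fps_qscale Q F) = fps_const Q * fps_qscale Q (fps_qdiff Q F)"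
  by (rule fps_ext) (simp add: algebra_simps)

text \<open>Coefficientwise, this is the splitting
  \<open>1 - Q^(m+1) = (1 - Q^(m+1-i)) + Q^(m+1-i) (1 - Q^i)\<close>.\<close>

lemma fps_qdiff_mult:
  "fps_qdiff Q (F * H) = fps_qdiff Q F * fps_qscale Q H + F * fps_qdiff Q H"
proof (rule fps_ext)
  fix m
  define a where "a i = F $ i * H $ (Suc m - i)" for i
  have split: "a i * (1 - Q ^ Suc m) = a i * (1 - Q ^ (Suc m - i)) + a i * Q ^ (Suc m - i) * (1 - Q ^ i)"
    if "i \<le> Suc m" for i
  proof -
    have "Q ^ (Suc m - i) * Q ^ i = Q ^ Suc m"
      using that by (simp add: power_add[symmetric])
    then show ?thesis by (simp add: algebra_simps)
  qed
  have "fps_qdiff Q (F * H) $ m = (\<Sum>i\<le>Suc m. a i) * (1 - Q ^ Suc m)"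
    by (simp add: fps_mult_nth atLeast0AtMost a_def)
  also have "\<dots> = (\<Sum>i\<le>Suc m. a i * (1 - Q ^ Suc m))"
    by (rule sum_distrib_right)
  also have "\<dots> = (\<Sum>i\<le>Suc m. a i * (1 - Q ^ (Suc m - i)))
                + (\<Sum>i\<le>Suc m. a i * Q ^ (Suc m - i) * (1 - Q ^ i))"
    unfolding sum.distrib[symmetric] by (intro sum.cong refl split) simp
  also have "(\<Sum>i\<le>Suc m. a i * (1 - Q ^ (Suc m - i))) = (F * fps_qdiff Q H) $ m"
    by (simp add: fps_mult_nth atLeast0AtMost a_def Suc_diff_le mult.assoc)
  also have "(\<Sum>i\<le>Suc m. a i * Q ^ (Suc m - i) * (1 - Q ^ i))
           = (\<Sum>i\<le>m. a (Suc i) * Q ^ (m - i) * (1 - Q ^ Suc i))"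
    by (subst sum.atMost_Suc_shift) simp
  also have "\<dots> = (fps_qdiff Q F * fps_qscale Q H) $ m"
    by (simp add: fps_mult_nth atLeast0AtMost a_def algebra_simps)
  finally show "fps_qdiff Q (F * H) $ m = (fps_qdiff Q F * fps_qscale Q H + F * fps_qdiff Q H) $ m"
    by (simp add: add.commute)
qed

section \<open>Agreement of power series up to a given order\<close>

definition fps_eq_upto :: "nat \<Rightarrow> 'a::zero fps \<Rightarrow> 'a fps \<Rightarrow> bool" where
  "fps_eq_upto N F H \<longleftrightarrow> (\<forall>m\<le>N. F $ m = H $ m)"

lemma fps_eq_upto_refl [simp]: "fps_eq_upto N F F"
  by (simp add: fps_eq_upto_def)

lemma fps_eq_upto_sym: "fps_eq_upto N F H \<Longrightarrow> fps_eq_upto N H F"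
  by (simp add: fps_eq_upto_def)

lemma fps_eq_upto_trans [trans]: "fps_eq_upto N F H \<Longrightarrow> fps_eq_upto N H K \<Longrightarrow> fps_eq_upto N F K"
  by (simp add: fps_eq_upto_def)

lemma fps_eq_upto_add:
  "fps_eq_upto N F H \<Longrightarrow> fps_eq_upto N F' H' \<Longrightarrow> fps_eq_upto N (F + F') (H + H')"
  by (simp add: fps_eq_upto_def)

lemma fps_eq_upto_diff:
  "fps_eq_upto N F H \<Longrightarrow> fps_eq_upto N F' H' \<Longrightarrow> fps_eq_upto N (F - F') (H - H')"
  by (simp add: fps_eq_upto_def)

lemma fps_eq_upto_uminus: "fps_eq_upto N F H \<Longrightarrow> fps_eq_upto N (- F) (- H)"
  by (simp add: fps_eq_upto_def)

lemma fps_eq_upto_mult: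
  "fps_eq_upto N F H \<Longrightarrow> fps_eq_upto N F' H' \<Longrightarrow> fps_eq_upto N (F * F') (H * H')"
  by (auto simp: fps_eq_upto_def fps_mult_nth intro!: sum.cong)

lemma fps_eq_upto_const_mult:
  "fps_eq_upto N F H \<Longrightarrow> fps_eq_upto N (fps_const c * F) (fps_const c * H)"
  by (rule fps_eq_upto_mult) simp_all

lemma fps_eq_upto_qscale: "fps_eq_upto N F H \<Longrightarrow> fps_eq_upto N (fps_qscale Q F) (fps_qscale Q H)"
  by (simp add: fps_eq_upto_def)

lemma fps_eq_upto_sum:
  "(\<And>x. x \<in> S \<Longrightarrow> fps_eq_upto N (F x) (H x)) \<Longrightarrow> fps_eq_upto N (sum F S) (sum H S)"
  by (induction S rule: infinite_finite_induct) (auto intro: fps_eq_upto_add)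

lemma fps_eq_upto_prod_list:
  "(\<And>x. x \<in> set xs \<Longrightarrow> fps_eq_upto N (F x) (H x)) \<Longrightarrow>
    fps_eq_upto N (prod_list (map F xs)) (prod_list (map H xs))"
  by (induction xs) (auto intro: fps_eq_upto_mult)

lemma fps_eq_upto_qdiff_SucI:
  assumes "\<And>m. invertible_el (1 - Q ^ Suc m)"
    and "fps_eq_upto N (fps_qdiff Q F) (fps_qdiff Q H)" and "F $ 0 = H $ 0"
  shows "fps_eq_upto (Suc N) F H"
  unfolding fps_eq_upto_def
proof (intro allI impI)
  fix m assume "m \<le> Suc N"
  show "F $ m = H $ m"
  proof (cases m)
    case (Suc k)
    obtain y where y: "(1 - Q ^ Suc k) * y = 1"
      using assms(1) by (auto simp: invertible_el_def)
    have "F $ Suc k * (1 - Q ^ Suc k) = H $ Suc k * (1 - Q ^ Suc k)"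
      using assms(2) \<open>m \<le> Suc N\<close> Suc by (simp add: fps_eq_upto_def)
    then have "F $ Suc k * (1 - Q ^ Suc k) * y = H $ Suc k * (1 - Q ^ Suc k) * y"
      by simp
    then show ?thesis
      using y Suc by (simp add: mult.assoc)
  qed (use assms(3) in simp)
qed

lemma fps_eq_upto_all: "(\<And>N. fps_eq_upto N F H) \<Longrightarrow> F = H"
  by (rule fps_ext) (auto simp: fps_eq_upto_def)

section \<open>Evaluated generating functions\<close>

lemma unit_inv_eqI:
  assumes "x * y = (1::'v::comm_ring_1)"
  shows "unit_inv x = y"
  unfolding unit_inv_def
proof (rule the_equality)
  show "x * y = 1" by fact
  fix z assume "x * z = 1"
  have "z = (x * y) * z" using assms by simp
  also have "\<dots> = y * (x * z)" by (simp add: algebra_simps)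
  finally show "z = y" using \<open>x * z = 1\<close> by simp
qed

lemma qpoch_Suc: "qpoch (Suc m) = qpoch m * (1 - qvar ^ Suc m)"
  by (simp add: qpoch_def)

lemma eval_word_Cons: "eval_word \<phi> (x # w) = eval_letter \<phi> x * eval_word \<phi> w"
  by (simp add: eval_word_def)

locale qgrammar_evaluation =
  fixes R :: "'s \<Rightarrow> nat \<Rightarrow> ('s, 'k::comm_ring_1) galg"
    and \<rho> :: "'s letter list \<Rightarrow> 's letter list"
    and \<iota> :: "'k poly \<Rightarrow> 'v::comm_ring_1"
    and \<phi> :: "'s \<Rightarrow> nat \<Rightarrow> 'v"
  assumes R_in: "\<And>s i. R s i \<in> galg_carrier"
    and order: "is_order \<rho>"
    and R_up: "\<And>s i. R s (Suc i) = escale qvar (up (R s i))"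
    and V: "embeds_Kq \<iota>"
    and units_qpoch: "\<And>n. invertible_el (\<iota> (qpoch n))"
    and phi_units: "\<And>s i. invertible_el (\<phi> s i)"
    and ml: "master_linear \<phi>"
begin

abbreviation Q :: 'v where "Q \<equiv> \<iota> qvar"

abbreviation Gen :: "('s, 'k) galg \<Rightarrow> 'v fps" where "Gen \<equiv> eval_gen \<iota> \<phi> R \<rho>"

lemma iota_add: "\<iota> (a + b) = \<iota> a + \<iota> b"
  using V by (simp add: embeds_Kq_def)

lemma iota_mult: "\<iota> (a * b) = \<iota> a * \<iota> b"
  using V by (simp add: embeds_Kq_def)

lemma iota_1: "\<iota> 1 = 1"
  using V by (simp add: embeds_Kq_def)

lemma iota_0: "\<iota> 0 = 0"
  using iota_add[of 0 0] by simp

lemma iota_diff: "\<iota> (a - b) = \<iota> a - \<iota> b"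
  using iota_add[of "a - b" b] by (simp add: algebra_simps)

lemma iota_power: "\<iota> (a ^ n) = \<iota> a ^ n"
  by (induction n) (simp_all add: iota_1 iota_mult)

lemma iota_qpoch_Suc: "\<iota> (qpoch (Suc m)) = \<iota> (qpoch m) * (1 - Q ^ Suc m)"
  by (simp only: qpoch_Suc iota_mult iota_diff iota_1 iota_power)

lemma invertible_one_minus_Q_power: "invertible_el (1 - Q ^ Suc m)"
proof -
  obtain y where "\<iota> (qpoch (Suc m)) * y = 1"
    using units_qpoch[of "Suc m"] by (auto simp: invertible_el_def)
  then have "(1 - Q ^ Suc m) * (\<iota> (qpoch m) * y) = 1"
    unfolding iota_qpoch_Suc by (simp only: mult_ac)
  then show ?thesis
    unfolding invertible_el_def by blast
qed

lemma unit_inv_qpoch_Suc: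
  "unit_inv (\<iota> (qpoch (Suc m))) * (1 - Q ^ Suc m) = unit_inv (\<iota> (qpoch m))"
proof -
  obtain y where y: "\<iota> (qpoch (Suc m)) * y = 1"
    using units_qpoch[of "Suc m"] by (auto simp: invertible_el_def)
  then have "\<iota> (qpoch m) * ((1 - Q ^ Suc m) * y) = 1"
    unfolding iota_qpoch_Suc by (simp only: mult.assoc)
  then have "unit_inv (\<iota> (qpoch m)) = (1 - Q ^ Suc m) * y"
    by (rule unit_inv_eqI)
  with unit_inv_eqI[OF y] show ?thesis
    by (simp add: mult.commute)
qed

lemma eval_letter_mult_inv_letter: "eval_letter \<phi> x * eval_letter \<phi> (inv_letter x) = 1"
proof -
  obtain s i b where x: "x = (s, i, b)" by (cases x)
  obtain y where "\<phi> s i * y = 1"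
    using phi_units[of s i] by (auto simp: invertible_el_def)
  then have "\<phi> s i * unit_inv (\<phi> s i) = 1" "unit_inv (\<phi> s i) * \<phi> s i = 1"
    by (simp_all add: unit_inv_eqI mult.commute)
  then show ?thesis
    by (cases b) (simp_all add: x)
qed

lemma eval_word_red: "eval_word \<phi> (red w) = eval_word \<phi> w"
proof (induction w)
  case (Cons x w)
  have "eval_word \<phi> (red_Cons x z) = eval_letter \<phi> x * eval_word \<phi> z" for z
    using eval_letter_mult_inv_letter[of x]
    by (cases z) (simp_all add: red_Cons_def eval_word_Cons mult.assoc[symmetric])
  with Cons show ?case
    by (simp add: eval_word_Cons)
qed simp

lemma eval_letter_up_letter: "eval_letter \<phi> (up_letter x) = eval_letter \<phi> x"
proof -
  obtain s i b where "x = (s, i, b)" by (cases x)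
  moreover have "\<phi> s (Suc i) = \<phi> s i" for s i
    using ml by (simp add: master_linear_def)
  ultimately show ?thesis by (cases b) simp_all
qed

lemma eval_eq_sum_superset:
  assumes "finite S" "Poly_Mapping.keys f \<subseteq> S"
  shows "eval \<iota> \<phi> f = (\<Sum>w\<in>S. \<iota> (Poly_Mapping.lookup f w) * eval_word \<phi> w)"
  unfolding eval_def
  by (rule sum.mono_neutral_left) (use assms in \<open>auto simp: in_keys_iff iota_0\<close>)

lemma eval_add: "eval \<iota> \<phi> (f + g) = eval \<iota> \<phi> f + eval \<iota> \<phi> g"
proof -
  let ?S = "Poly_Mapping.keys f \<union> Poly_Mapping.keys g"
  have "eval \<iota> \<phi> (f + g) = (\<Sum>w\<in>?S. \<iota> (Poly_Mapping.lookup (f + g) w) * eval_word \<phi> w)"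
    by (rule eval_eq_sum_superset) (auto dest: keys_add[THEN subsetD])
  also have "\<dots> = (\<Sum>w\<in>?S. \<iota> (Poly_Mapping.lookup f w) * eval_word \<phi> w)
                + (\<Sum>w\<in>?S. \<iota> (Poly_Mapping.lookup g w) * eval_word \<phi> w)"
    by (simp add: lookup_add iota_add sum.distrib distrib_right)
  also have "\<dots> = eval \<iota> \<phi> f + eval \<iota> \<phi> g"
    by (subst (1 2) eval_eq_sum_superset[symmetric]) auto
  finally show ?thesis .
qed

lemma eval_escale: "eval \<iota> \<phi> (escale a f) = \<iota> a * eval \<iota> \<phi> f"
proof -
  have "eval \<iota> \<phi> (escale a f)
      = (\<Sum>w\<in>Poly_Mapping.keys f. \<iota> (Poly_Mapping.lookup (escale a f) w) * eval_word \<phi> w)"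
    by (rule eval_eq_sum_superset) (auto simp: keys_escale)
  then show ?thesis
    by (simp add: eval_def sum_distrib_left iota_mult mult.assoc)
qed

lemma eval_basis: "eval \<iota> \<phi> (basis w) = eval_word \<phi> w"
  by (simp add: eval_def basis_def iota_1 eval_word_red)

lemma Gen_nth: "Gen f $ n = eval \<iota> \<phi> ((qder R \<rho> ^^ n) f) * unit_inv (\<iota> (qpoch n))"
  by (simp add: eval_gen_def)

lemma Gen_nth_0: "Gen f $ 0 = eval \<iota> \<phi> f"
  using unit_inv_eqI[of "1::'v" 1] by (simp add: Gen_nth iota_1 qpoch_def)

lemma Gen_add: "Gen (f + g) = Gen f + Gen g"
  by (rule fps_ext) (simp add: Gen_nth qder_pow_add eval_add algebra_simps)

lemma Gen_escale: "Gen (escale a f) = fps_const (\<iota> a) * Gen f"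
  by (rule fps_ext) (simp add: Gen_nth qder_pow_escale eval_escale algebra_simps)

lemma Gen_zero: "Gen 0 = 0"
  using Gen_add[of 0 0] by simp

lemma Gen_uminus: "Gen (- f) = - Gen f"
  using Gen_add[of f "- f"] by (simp add: Gen_zero eq_neg_iff_add_eq_0 add.commute)

lemma Gen_sum: "Gen (sum F S) = (\<Sum>x\<in>S. Gen (F x))"
  by (induction S rule: infinite_finite_induct) (simp_all add: Gen_zero Gen_add)

lemma Gen_lin_ext:
  "Gen (lin_ext h f) = (\<Sum>u\<in>Poly_Mapping.keys f. fps_const (\<iota> (Poly_Mapping.lookup f u)) * Gen (h u))"
  by (simp add: lin_ext_def Gen_sum Gen_escale)

lemma Gen_eq_sum_basis:
  "f \<in> galg_carrier \<Longrightarrow>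
    Gen f = (\<Sum>u\<in>Poly_Mapping.keys f. fps_const (\<iota> (Poly_Mapping.lookup f u)) * Gen (basis u))"
  by (subst galg_carrier_eq_sum_basis) (simp_all add: Gen_sum Gen_escale)

lemma fps_qdiff_Gen: "fps_qdiff Q (Gen f) = Gen (qder R \<rho> f)"
proof (rule fps_ext)
  fix m
  have "fps_qdiff Q (Gen f) $ m
      = eval \<iota> \<phi> ((qder R \<rho> ^^ m) (qder R \<rho> f)) * (unit_inv (\<iota> (qpoch (Suc m))) * (1 - Q ^ Suc m))"
    by (simp add: Gen_nth funpow_Suc_right mult.assoc del: funpow.simps)
  then show "fps_qdiff Q (Gen f) $ m = Gen (qder R \<rho> f) $ m"
    by (simp only: unit_inv_qpoch_Suc Gen_nth)
qed

section \<open>Multiplicativity, order by order\<close>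

definition gen_letter :: "'s letter \<Rightarrow> 'v fps" where
  "gen_letter x = Gen (basis [x])"

definition gen_word :: "'s letter list \<Rightarrow> 'v fps" where
  "gen_word w = prod_list (map gen_letter w)"

definition gen_rule :: "'s letter \<Rightarrow> 'v fps" where
  "gen_rule x = Gen (rule_letter R x)"

text \<open>What \<open>Gen (qder_word R \<rho> w)\<close> becomes once \<open>Gen\<close> is known to be multiplicative,
  to forget the order \<open>\<rho>\<close>, and to turn the up-arrow into \<open>u \<mapsto> Q u\<close>.\<close>

definition leibniz_sum :: "'s letter list \<Rightarrow> 'v fps" where
  "leibniz_sum w = (\<Sum>j<length w.
     gen_word (take j w) * gen_rule (w ! j) * fps_qscale Q (gen_word (drop (Suc j) w)))"

definition multiplicative_upto :: "nat \<Rightarrow> bool" where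
  "multiplicative_upto N \<longleftrightarrow>
     (\<forall>w. fps_eq_upto N (Gen (basis w)) (gen_word w)) \<and>
     (\<forall>x. fps_eq_upto N (gen_letter (up_letter x)) (fps_qscale Q (gen_letter x)))"

lemma gen_word_Nil [simp]: "gen_word [] = 1"
  by (simp add: gen_word_def)

lemma gen_word_Cons: "gen_word (x # w) = gen_letter x * gen_word w"
  by (simp add: gen_word_def)

lemma gen_word_append: "gen_word (u @ w) = gen_word u * gen_word w"
  by (simp add: gen_word_def)

lemma gen_word_mset_eq: "mset u = mset v \<Longrightarrow> gen_word u = gen_word v"
  unfolding gen_word_def by (metis mset_map prod_mset_prod_list)

lemma leibniz_sum_Nil [simp]: "leibniz_sum [] = 0"
  by (simp add: leibniz_sum_def)

lemma leibniz_sum_Cons: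
  "leibniz_sum (x # w) = gen_rule x * fps_qscale Q (gen_word w) + gen_letter x * leibniz_sum w"
  unfolding leibniz_sum_def
  by (simp add: sum.lessThan_Suc_shift gen_word_Cons sum_distrib_left mult.assoc
      del: sum.lessThan_Suc)

lemma Gen_basis_upto: "multiplicative_upto N \<Longrightarrow> fps_eq_upto N (Gen (basis w)) (gen_word w)"
  by (simp add: multiplicative_upto_def)

lemma gen_letter_up_letter_upto:
  "multiplicative_upto N \<Longrightarrow> fps_eq_upto N (gen_letter (up_letter x)) (fps_qscale Q (gen_letter x))"
  unfolding multiplicative_upto_def by blast

lemma Gen_emul_upto:
  assumes N: "multiplicative_upto N" and "f \<in> galg_carrier" "g \<in> galg_carrier"
  shows "fps_eq_upto N (Gen (emul f g)) (Gen f * Gen g)"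
proof -
  let ?c = "\<lambda>f u. fps_const (\<iota> (Poly_Mapping.lookup f u))"
  have basis_append: "fps_eq_upto N (Gen (basis (u @ v))) (Gen (basis u) * Gen (basis v))" for u v
  proof -
    have "fps_eq_upto N (Gen (basis (u @ v))) (gen_word u * gen_word v)"
      using Gen_basis_upto[OF N, of "u @ v"] unfolding gen_word_append .
    also have "fps_eq_upto N \<dots> (Gen (basis u) * Gen (basis v))"
      using N by (intro fps_eq_upto_mult fps_eq_upto_sym[OF Gen_basis_upto])
    finally show ?thesis .
  qed
  have "Gen (emul f g) = (\<Sum>u\<in>Poly_Mapping.keys f. \<Sum>v\<in>Poly_Mapping.keys g.
      ?c f u * ?c g v * Gen (basis (u @ v)))"
    by (simp add: emul_def Gen_sum single_red_eq_escale_basis Gen_escale iota_mult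
        fps_const_mult[symmetric] del: fps_const_mult)
  also have "fps_eq_upto N \<dots> (\<Sum>u\<in>Poly_Mapping.keys f. \<Sum>v\<in>Poly_Mapping.keys g.
      ?c f u * ?c g v * (Gen (basis u) * Gen (basis v)))"
    by (intro fps_eq_upto_sum fps_eq_upto_mult basis_append fps_eq_upto_refl)
  also have "\<dots> = (\<Sum>u\<in>Poly_Mapping.keys f. ?c f u * Gen (basis u))
                * (\<Sum>v\<in>Poly_Mapping.keys g. ?c g v * Gen (basis v))"
    by (simp add: sum_product mult_ac del: fps_const_mult)
  also have "\<dots> = Gen f * Gen g"
    using assms(2,3) by (simp add: Gen_eq_sum_basis)
  finally show ?thesis .
qed

lemma Gen_up_upto:
  assumes N: "multiplicative_upto N" and "f \<in> galg_carrier"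
  shows "fps_eq_upto N (Gen (up f)) (fps_qscale Q (Gen f))"
proof -
  let ?c = "\<lambda>u. fps_const (\<iota> (Poly_Mapping.lookup f u))"
  have basis_up: "fps_eq_upto N (Gen (basis (map up_letter u))) (fps_qscale Q (Gen (basis u)))" for u
  proof -
    have "fps_eq_upto N (Gen (basis (map up_letter u))) (prod_list (map (\<lambda>x. gen_letter (up_letter x)) u))"
      using Gen_basis_upto[OF N, of "map up_letter u"] by (simp add: gen_word_def o_def)
    also have "fps_eq_upto N \<dots> (prod_list (map (\<lambda>x. fps_qscale Q (gen_letter x)) u))"
      using N by (intro fps_eq_upto_prod_list gen_letter_up_letter_upto)
    also have "\<dots> = fps_qscale Q (gen_word u)"
      by (simp add: gen_word_def fps_qscale_prod_list)
    also have "fps_eq_upto N \<dots> (fps_qscale Q (Gen (basis u)))"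
      using N by (intro fps_eq_upto_qscale fps_eq_upto_sym[OF Gen_basis_upto])
    finally show ?thesis .
  qed
  have "Gen (up f) = (\<Sum>u\<in>Poly_Mapping.keys f. ?c u * Gen (basis (map up_letter u)))"
    by (simp add: up_def Gen_lin_ext up_word_eq_map)
  also have "fps_eq_upto N \<dots> (\<Sum>u\<in>Poly_Mapping.keys f. ?c u * fps_qscale Q (Gen (basis u)))"
    by (intro fps_eq_upto_sum fps_eq_upto_const_mult basis_up)
  also have "\<dots> = fps_qscale Q (Gen f)"
    using assms(2) by (simp add: Gen_eq_sum_basis[of f] fps_qscale_sum fps_qscale_const_mult)
  finally show ?thesis .
qed

lemma Gen_order_apply_upto:
  assumes N: "multiplicative_upto N" and f: "f \<in> galg_carrier"
  shows "fps_eq_upto N (Gen (order_apply \<rho> f)) (Gen f)"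
proof -
  let ?c = "\<lambda>u. fps_const (\<iota> (Poly_Mapping.lookup f u))"
  have "Gen (order_apply \<rho> f) = (\<Sum>u\<in>Poly_Mapping.keys f. ?c u * Gen (basis (\<rho> u)))"
    by (simp add: order_apply_def Gen_lin_ext)
  also have "fps_eq_upto N \<dots> (\<Sum>u\<in>Poly_Mapping.keys f. ?c u * Gen (basis u))"
  proof (intro fps_eq_upto_sum fps_eq_upto_const_mult)
    fix u assume "u \<in> Poly_Mapping.keys f"
    then have "mset (\<rho> u) = mset u"
      using f order by (auto simp: galg_carrier_def is_order_def)
    then have "gen_word (\<rho> u) = gen_word u"
      by (rule gen_word_mset_eq)
    then show "fps_eq_upto N (Gen (basis (\<rho> u))) (Gen (basis u))"
      using Gen_basis_upto[OF N, of "\<rho> u"] fps_eq_upto_sym[OF Gen_basis_upto[OF N, of u]]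
      by (auto intro: fps_eq_upto_trans)
  qed
  also have "\<dots> = Gen f"
    using f by (simp add: Gen_eq_sum_basis[of f])
  finally show ?thesis .
qed

lemma gen_rule_positive: "gen_rule (s, i, True) = Gen (R s i)"
  by (simp add: gen_rule_def)

lemma gen_rule_negative_upto:
  fixes s :: 's and i :: nat
  assumes N: "multiplicative_upto N"
  defines "x \<equiv> (s, i, False)"
  shows "fps_eq_upto N (gen_rule x) (- (gen_letter x * Gen (R s i) * fps_qscale Q (gen_letter x)))"
proof -
  have "gen_rule x = - Gen (emul (emul (basis [x]) (R s i)) (basis [up_letter x]))"
    by (simp add: gen_rule_def Gen_uminus x_def)
  also have "fps_eq_upto N \<dots> (- (Gen (emul (basis [x]) (R s i)) * gen_letter (up_letter x)))"
    unfolding gen_letter_def using N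
    by (intro fps_eq_upto_uminus Gen_emul_upto galg_carrier_emul galg_carrier_basis)
  also have "fps_eq_upto N \<dots> (- (gen_letter x * Gen (R s i) * fps_qscale Q (gen_letter x)))"
    unfolding gen_letter_def using N
    by (intro fps_eq_upto_uminus fps_eq_upto_mult Gen_emul_upto galg_carrier_basis R_in
        gen_letter_up_letter_upto[unfolded gen_letter_def])
  finally show ?thesis .
qed

lemma Gen_R_Suc_upto:
  assumes N: "multiplicative_upto N"
  shows "fps_eq_upto N (Gen (R s (Suc i))) (fps_const Q * fps_qscale Q (Gen (R s i)))"
proof -
  have "Gen (R s (Suc i)) = fps_const Q * Gen (up (R s i))"
    by (simp add: R_up Gen_escale)
  also have "fps_eq_upto N \<dots> (fps_const Q * fps_qscale Q (Gen (R s i)))"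
    using N by (intro fps_eq_upto_const_mult Gen_up_upto R_in)
  finally show ?thesis .
qed

lemma gen_rule_up_letter_upto:
  assumes N: "multiplicative_upto N"
  shows "fps_eq_upto N (gen_rule (up_letter x)) (fps_const Q * fps_qscale Q (gen_rule x))"
proof -
  obtain s i b where x: "x = (s, i, b)" by (cases x)
  show ?thesis
  proof (cases b)
    case True
    then show ?thesis
      using x Gen_R_Suc_upto[OF N] by (simp add: gen_rule_positive)
  next
    case False
    let ?L = "gen_letter x" and ?r = "Gen (R s i)"
    have "fps_eq_upto N (gen_rule (up_letter x))
        (- (gen_letter (up_letter x) * Gen (R s (Suc i)) * fps_qscale Q (gen_letter (up_letter x))))"
      using gen_rule_negative_upto[OF N, of s "Suc i"] x False by simp
    also have "fps_eq_upto N \<dots>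
        (- (fps_qscale Q ?L * (fps_const Q * fps_qscale Q ?r) * fps_qscale Q (fps_qscale Q ?L)))"
      using N by (intro fps_eq_upto_uminus fps_eq_upto_mult fps_eq_upto_qscale
          gen_letter_up_letter_upto Gen_R_Suc_upto)
    also have "\<dots> = fps_const Q * fps_qscale Q (- (?L * ?r * fps_qscale Q ?L))"
      by (simp add: fps_qscale_mult fps_qscale_uminus mult_ac)
    also have "fps_eq_upto N \<dots> (fps_const Q * fps_qscale Q (gen_rule x))"
      using fps_eq_upto_sym[OF gen_rule_negative_upto[OF N, of s i]] x False
      by (intro fps_eq_upto_const_mult fps_eq_upto_qscale) simp
    finally show ?thesis .
  qed
qed

lemma Gen_qder_word_upto:
  assumes N: "multiplicative_upto N"
  shows "fps_eq_upto N (Gen (qder_word R \<rho> w)) (leibniz_sum w)"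
  unfolding qder_word_def leibniz_sum_def Gen_sum
proof (intro fps_eq_upto_sum)
  fix j
  let ?a = "basis (take j w)" and ?x = "w ! j" and ?b = "basis (drop (Suc j) w)"
  have "fps_eq_upto N (Gen (order_apply \<rho> (emul (emul ?a (rule_letter R ?x)) (up ?b))))
      (Gen (emul (emul ?a (rule_letter R ?x)) (up ?b)))"
    using N by (intro Gen_order_apply_upto galg_carrier_emul)
  also have "fps_eq_upto N \<dots> (Gen (emul ?a (rule_letter R ?x)) * Gen (up ?b))"
    using N by (intro Gen_emul_upto galg_carrier_emul galg_carrier_up)
  also have "fps_eq_upto N \<dots> (Gen ?a * gen_rule ?x * fps_qscale Q (Gen ?b))"
    unfolding gen_rule_def using N
    by (intro fps_eq_upto_mult Gen_emul_upto Gen_up_upto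
        galg_carrier_basis galg_carrier_rule_letter R_in)
  also have "fps_eq_upto N \<dots>
      (gen_word (take j w) * gen_rule ?x * fps_qscale Q (gen_word (drop (Suc j) w)))"
    using N by (intro fps_eq_upto_mult fps_eq_upto_qscale Gen_basis_upto fps_eq_upto_refl)
  finally show "fps_eq_upto N (Gen (order_apply \<rho> (emul (emul ?a (rule_letter R ?x)) (up ?b))))
      (gen_word (take j w) * gen_rule ?x * fps_qscale Q (gen_word (drop (Suc j) w)))" .
qed

lemma qdiff_gen_letter_upto:
  assumes N: "multiplicative_upto N"
  shows "fps_eq_upto N (fps_qdiff Q (gen_letter x)) (gen_rule x)"
proof -
  have "fps_qdiff Q (gen_letter x) = Gen (qder_word R \<rho> [x])"
    by (simp add: gen_letter_def fps_qdiff_Gen qder_basis red_Cons_def)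
  also have "fps_eq_upto N \<dots> (leibniz_sum [x])"
    using N by (rule Gen_qder_word_upto)
  finally show ?thesis
    by (simp add: leibniz_sum_Cons)
qed

lemma leibniz_sum_upto:
  assumes N: "multiplicative_upto N"
  shows "fps_eq_upto N (leibniz_sum w) (fps_qdiff Q (gen_word w))"
proof (induction w)
  case (Cons x w)
  have "leibniz_sum (x # w) = gen_rule x * fps_qscale Q (gen_word w) + gen_letter x * leibniz_sum w"
    by (rule leibniz_sum_Cons)
  also have "fps_eq_upto N \<dots>
      (fps_qdiff Q (gen_letter x) * fps_qscale Q (gen_word w) + gen_letter x * fps_qdiff Q (gen_word w))"
    using N Cons.IH
    by (intro fps_eq_upto_add fps_eq_upto_mult fps_eq_upto_refl fps_eq_upto_sym[OF qdiff_gen_letter_upto])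
  also have "\<dots> = fps_qdiff Q (gen_word (x # w))"
    by (simp add: gen_word_Cons fps_qdiff_mult)
  finally show ?case .
qed (simp add: fps_eq_upto_def)

lemma gen_letter_mult_inv_letter_upto:
  assumes N: "multiplicative_upto N"
  shows "fps_eq_upto N (gen_letter x * gen_letter (inv_letter x)) 1"
proof -
  have "gen_letter x * gen_letter (inv_letter x) = gen_word [x, inv_letter x]"
    by (simp add: gen_word_def)
  also have "fps_eq_upto N \<dots> (Gen (basis [x, inv_letter x]))"
    using N by (rule fps_eq_upto_sym[OF Gen_basis_upto])
  also have "\<dots> = Gen (basis [])"
    by (simp add: basis_def red_Cons_def)
  also have "fps_eq_upto N \<dots> (gen_word [])"
    using N by (rule Gen_basis_upto)
  finally show ?thesis
    by simp
qed

lemma qdiff_gen_letter_mult_inv_letter_upto: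
  assumes N: "multiplicative_upto N"
  shows "fps_eq_upto N (fps_qdiff Q (gen_letter x * gen_letter (inv_letter x))) 0"
proof -
  obtain s i b where x: "x = (s, i, b)" by (cases x)
  let ?L = gen_letter and ?x' = "inv_letter x" and ?r = "Gen (R s i)"
  have "fps_qdiff Q (?L x * ?L ?x')
      = fps_qdiff Q (?L x) * fps_qscale Q (?L ?x') + ?L x * fps_qdiff Q (?L ?x')"
    by (rule fps_qdiff_mult)
  also have "fps_eq_upto N \<dots> (gen_rule x * fps_qscale Q (?L ?x') + ?L x * gen_rule ?x')"
    using N by (intro fps_eq_upto_add fps_eq_upto_mult fps_eq_upto_refl qdiff_gen_letter_upto)
  also have "fps_eq_upto N \<dots> 0"
  proof (cases b)
    case True
    have "fps_eq_upto N (gen_rule x * fps_qscale Q (?L ?x') + ?L x * gen_rule ?x')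
        (?r * fps_qscale Q (?L ?x') + ?L x * - (?L ?x' * ?r * fps_qscale Q (?L ?x')))"
      using gen_rule_negative_upto[OF N, of s i] x True
      by (intro fps_eq_upto_add fps_eq_upto_mult) (simp_all add: gen_rule_positive)
    also have "\<dots> = ?r * fps_qscale Q (?L ?x') * (1 - ?L x * ?L ?x')"
      by (simp add: algebra_simps)
    also have "fps_eq_upto N \<dots> (?r * fps_qscale Q (?L ?x') * (1 - 1))"
      using N by (intro fps_eq_upto_mult fps_eq_upto_refl fps_eq_upto_diff
          gen_letter_mult_inv_letter_upto)
    finally show ?thesis
      by simp
  next
    case False
    have "fps_eq_upto N (gen_rule x * fps_qscale Q (?L ?x') + ?L x * gen_rule ?x')
        (- (?L x * ?r * fps_qscale Q (?L x)) * fps_qscale Q (?L ?x') + ?L x * ?r)"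
      using gen_rule_negative_upto[OF N, of s i] x False
      by (intro fps_eq_upto_add fps_eq_upto_mult) (simp_all add: gen_rule_positive)
    also have "\<dots> = ?L x * ?r * (1 - fps_qscale Q (?L x * ?L ?x'))"
      by (simp add: algebra_simps fps_qscale_mult)
    also have "fps_eq_upto N \<dots> (?L x * ?r * (1 - fps_qscale Q 1))"
      using N by (intro fps_eq_upto_mult fps_eq_upto_refl fps_eq_upto_diff fps_eq_upto_qscale
          gen_letter_mult_inv_letter_upto)
    finally show ?thesis
      by simp
  qed
  finally show ?thesis .
qed

lemma gen_word_red_upto:
  assumes N: "multiplicative_upto N"
  shows "fps_eq_upto N (gen_word (red w)) (gen_word w)"
proof -
  have "fps_eq_upto N (gen_word (red w)) (Gen (basis (red w)))"
    using N by (rule fps_eq_upto_sym[OF Gen_basis_upto])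
  also have "Gen (basis (red w)) = Gen (basis w)"
    by (simp add: basis_red)
  also have "fps_eq_upto N \<dots> (gen_word w)"
    using N by (rule Gen_basis_upto)
  finally show ?thesis .
qed

lemma qdiff_gen_word_red_Cons_upto:
  assumes N: "multiplicative_upto N"
  shows "fps_eq_upto N (fps_qdiff Q (gen_word (red_Cons x z))) (fps_qdiff Q (gen_word (x # z)))"
proof (cases "\<exists>zs. z = inv_letter x # zs")
  case True
  then obtain zs where z: "z = inv_letter x # zs" ..
  have "fps_qdiff Q (gen_word (red_Cons x z)) = fps_qdiff Q (1 * gen_word zs)"
    by (simp add: z red_Cons_def)
  also have "\<dots> = 0 * fps_qscale Q (gen_word zs) + 1 * fps_qdiff Q (gen_word zs)"
    by simp
  also have "fps_eq_upto N \<dots>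
      (fps_qdiff Q (gen_letter x * gen_letter (inv_letter x)) * fps_qscale Q (gen_word zs)
        + (gen_letter x * gen_letter (inv_letter x)) * fps_qdiff Q (gen_word zs))"
    using N by (intro fps_eq_upto_add fps_eq_upto_mult fps_eq_upto_refl fps_eq_upto_sym
        [OF gen_letter_mult_inv_letter_upto] fps_eq_upto_sym[OF qdiff_gen_letter_mult_inv_letter_upto])
  also have "\<dots> = fps_qdiff Q (gen_word (x # z))"
    by (simp add: z gen_word_Cons fps_qdiff_mult fps_qscale_mult) (simp add: algebra_simps)
  finally show ?thesis .
next
  case False
  then show ?thesis
    by (auto simp: red_Cons_def split: list.split)
qed

lemma qdiff_gen_word_red_upto:
  assumes N: "multiplicative_upto N"
  shows "fps_eq_upto N (fps_qdiff Q (gen_word (red w))) (fps_qdiff Q (gen_word w))"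
proof (induction w)
  case (Cons x w)
  have "fps_eq_upto N (fps_qdiff Q (gen_word (red (x # w)))) (fps_qdiff Q (gen_word (x # red w)))"
    using N by (simp add: qdiff_gen_word_red_Cons_upto)
  also have "\<dots> = fps_qdiff Q (gen_letter x) * fps_qscale Q (gen_word (red w))
                + gen_letter x * fps_qdiff Q (gen_word (red w))"
    by (simp add: gen_word_Cons fps_qdiff_mult)
  also have "fps_eq_upto N \<dots> (fps_qdiff Q (gen_letter x) * fps_qscale Q (gen_word w)
                + gen_letter x * fps_qdiff Q (gen_word w))"
    using N Cons.IH
    by (intro fps_eq_upto_add fps_eq_upto_mult fps_eq_upto_refl fps_eq_upto_qscale gen_word_red_upto)
  also have "\<dots> = fps_qdiff Q (gen_word (x # w))"
    by (simp add: gen_word_Cons fps_qdiff_mult)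
  finally show ?case .
qed simp

lemma qdiff_Gen_basis_upto:
  assumes N: "multiplicative_upto N"
  shows "fps_eq_upto N (fps_qdiff Q (Gen (basis w))) (fps_qdiff Q (gen_word w))"
proof -
  have "fps_qdiff Q (Gen (basis w)) = Gen (qder_word R \<rho> (red w))"
    by (simp add: fps_qdiff_Gen qder_basis)
  also have "fps_eq_upto N \<dots> (leibniz_sum (red w))"
    using N by (rule Gen_qder_word_upto)
  also have "fps_eq_upto N \<dots> (fps_qdiff Q (gen_word (red w)))"
    using N by (rule leibniz_sum_upto)
  also have "fps_eq_upto N \<dots> (fps_qdiff Q (gen_word w))"
    using N by (rule qdiff_gen_word_red_upto)
  finally show ?thesis .
qed

lemma gen_letter_nth_0: "gen_letter x $ 0 = eval_letter \<phi> x"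
  by (simp add: gen_letter_def Gen_nth_0 eval_basis eval_word_def)

lemma gen_word_nth_0: "gen_word w $ 0 = eval_word \<phi> w"
proof -
  have "prod_list (map F w) $ 0 = prod_list (map (\<lambda>x. F x $ 0) w)" for F :: "'s letter \<Rightarrow> 'v fps"
    by (induction w) simp_all
  then show ?thesis
    by (simp add: gen_word_def gen_letter_nth_0 eval_word_def)
qed

lemma multiplicative_upto_0: "multiplicative_upto 0"
  by (simp add: multiplicative_upto_def fps_eq_upto_def Gen_nth_0 eval_basis gen_word_nth_0
      gen_letter_nth_0 eval_letter_up_letter del: up_letter_simp)

lemma multiplicative_upto_Suc:
  assumes N: "multiplicative_upto N"
  shows "multiplicative_upto (Suc N)"
  unfolding multiplicative_upto_def
proof (intro conjI allI)
  fix w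
  show "fps_eq_upto (Suc N) (Gen (basis w)) (gen_word w)"
    by (rule fps_eq_upto_qdiff_SucI[OF invertible_one_minus_Q_power])
      (simp_all add: Gen_nth_0 eval_basis gen_word_nth_0 qdiff_Gen_basis_upto[OF N])
next
  fix x
  have "fps_eq_upto N (fps_qdiff Q (gen_letter (up_letter x))) (gen_rule (up_letter x))"
    using N by (rule qdiff_gen_letter_upto)
  also have "fps_eq_upto N \<dots> (fps_const Q * fps_qscale Q (gen_rule x))"
    using N by (rule gen_rule_up_letter_upto)
  also have "fps_eq_upto N \<dots> (fps_const Q * fps_qscale Q (fps_qdiff Q (gen_letter x)))"
    using N by (intro fps_eq_upto_const_mult fps_eq_upto_qscale
        fps_eq_upto_sym[OF qdiff_gen_letter_upto])
  also have "\<dots> = fps_qdiff Q (fps_qscale Q (gen_letter x))"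
    by (simp add: fps_qdiff_qscale)
  finally show "fps_eq_upto (Suc N) (gen_letter (up_letter x)) (fps_qscale Q (gen_letter x))"
    by (rule fps_eq_upto_qdiff_SucI[OF invertible_one_minus_Q_power])
      (simp_all add: gen_letter_nth_0 eval_letter_up_letter del: up_letter_simp)
qed

lemma multiplicative_upto: "multiplicative_upto N"
  by (induction N) (simp_all add: multiplicative_upto_0 multiplicative_upto_Suc)

end

theorem theorem4p14:
  fixes R :: "'s \<Rightarrow> nat \<Rightarrow> ('s, 'k::{comm_ring_1, ring_char_0}) galg"
    and \<rho> :: "'s letter list \<Rightarrow> 's letter list"
    and \<iota> :: "'k poly \<Rightarrow> 'v::comm_ring_1"
    and \<phi> :: "'s \<Rightarrow> nat \<Rightarrow> 'v"
    and f g :: "('s, 'k) galg"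
  assumes R_in: "\<And>s i. R s i \<in> galg_carrier"
    and order: "is_order \<rho>"
    and R_up: "\<And>s i. R s (Suc i) = escale qvar (up (R s i))"
    and V: "embeds_Kq \<iota>"
    and units_qpoch: "\<And>n. invertible_el (\<iota> (qpoch n))"
    and phi_units: "\<And>s i. invertible_el (\<phi> s i)"
    and ml: "master_linear \<phi>"
    and f: "f \<in> galg_carrier" and g: "g \<in> galg_carrier"
  shows "eval_gen \<iota> \<phi> R \<rho> (emul f g) = eval_gen \<iota> \<phi> R \<rho> f * eval_gen \<iota> \<phi> R \<rho> g"
proof -
  interpret qgrammar_evaluation R \<rho> \<iota> \<phi>
    by unfold_locales (fact R_in order R_up V units_qpoch phi_units ml)+
  show ?thesis
    using Gen_emul_upto[OF multiplicative_upto f g] by (rule fps_eq_upto_all)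
qed

end
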